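(* Let $X$ be a $T_1$-space and let $\mathcal{B}$ be a base of $X$ which is regular at non-isolated points. Then the family $\mathcal{B}^{m}=\{P\in\mathcal{B}: \text{if } P\subset Q\in\mathcal{B} \text{ then } Q=P\}$ of maximal members of $\mathcal{B}$ is locally finite at non-isolated points and covers $X\setminus I(X)$.
   Context: $I(X)$ denotes the set of isolated points of $X$. A base $\mathcal{B}$ of $X$ is regular at a point $x$ if for every neighborhood $U$ of $x$ there is an open set $V$ with $x\in V\subset U$ such that $\{B\in\mathcal{B}: B\cap V\neq\emptyset \text{ and } B\not\subset U\}$ is finite. $\mathcal{B}$ is a regular base at non-isolated points if it is regular at every $x\in X\setminus I(X)$. A family $\mathcal{F}$ of subsets of $X$ is locally finite at non-isolated points if every $x\in X\setminus I(X)$ has a neighborhood meeting only finitely many members of $\mathcal{F}$. *)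

theory Defs
  imports "HOL-Analysis.Analysis"
begin

text \<open>Isolated points I(X) of the whole space (the carrier is the type universe).\<close>
definition isolated_points :: "'a::topological_space set" where
  "isolated_points = {x. open {x}}"

definition regular_at :: "'a::topological_space set set \<Rightarrow> 'a \<Rightarrow> bool" where
  "regular_at \<B> x \<longleftrightarrow>
     (\<forall>U. open U \<and> x \<in> U \<longrightarrow>
        (\<exists>V. open V \<and> x \<in> V \<and> V \<subseteq> U \<and>
             finite {B \<in> \<B>. B \<inter> V \<noteq> {} \<and> \<not> B \<subseteq> U}))"

definition regular_base_nonisolated :: "'a::topological_space set set \<Rightarrow> bool" where
  "regular_base_nonisolated \<B> \<longleftrightarrow>
     topological_basis \<B> \<and> (\<forall>x. x \<notin> isolated_points \<longrightarrow> regular_at \<B> x)"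

definition locally_finite_nonisolated :: "'a::topological_space set set \<Rightarrow> bool" where
  "locally_finite_nonisolated \<F> \<longleftrightarrow>
     (\<forall>x. x \<notin> isolated_points \<longrightarrow>
        (\<exists>U. open U \<and> x \<in> U \<and> finite {F \<in> \<F>. F \<inter> U \<noteq> {}}))"

definition maximal_members :: "'a set set \<Rightarrow> 'a set set" where
  "maximal_members \<B> = {P \<in> \<B>. \<forall>Q \<in> \<B>. P \<subseteq> Q \<longrightarrow> Q = P}"

end

theory Submission
  imports Defs
begin

text \<open>
  Fix a non-isolated point x and some member B0 of the base containing x.
  Regularity at x applied to the neighbourhood B0 yields an open V with
  x \<in> V \<subseteq> B0 such that only finitely many members of the base meet V
  without being contained in B0.  Two counting arguments follow:
  (1) a maximal member meeting V is either B0 itself or one of these finitely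
      many sets, since a maximal member inside B0 must equal B0; hence V meets
      only finitely many maximal members (local finiteness at x);
  (2) every member containing B0 meets V, so B0 has only finitely many
      supersets in the base; a maximal one among them is a maximal member of
      the base containing x (the covering property).
\<close>

text \<open>A maximal member of \<B> lying inside B0 \<in> \<B> equals B0; hence every
  maximal member meeting V is B0 or meets V without being contained in B0.\<close>
lemma maximal_members_meeting_subset:
  assumes "B0 \<in> \<B>"
  shows "{F \<in> maximal_members \<B>. F \<inter> V \<noteq> {}}
           \<subseteq> insert B0 {B \<in> \<B>. B \<inter> V \<noteq> {} \<and> \<not> B \<subseteq> B0}"
  using assms unfolding maximal_members_def by blast

lemma maximal_member_above:
  assumes fin: "finite {Q \<in> \<B>. B0 \<subseteq> Q}" and B0: "B0 \<in> \<B>"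
  shows "\<exists>M \<in> maximal_members \<B>. B0 \<subseteq> M"
proof -
  have "{Q \<in> \<B>. B0 \<subseteq> Q} \<noteq> {}" using B0 by blast
  then obtain M where M: "M \<in> \<B>" "B0 \<subseteq> M"
    and max: "\<forall>Q \<in> {Q \<in> \<B>. B0 \<subseteq> Q}. M \<le> Q \<longrightarrow> M = Q"
    using finite_has_maximal[OF fin] by blast
  have "M \<in> maximal_members \<B>"
    unfolding maximal_members_def using M max by auto
  with M show ?thesis by blast
qed

lemma regular_at_finite_maximal_near:
  assumes "regular_at \<B> x" and B0: "B0 \<in> \<B>" "open B0" "x \<in> B0"
  shows "\<exists>V. open V \<and> x \<in> V \<and> finite {F \<in> maximal_members \<B>. F \<inter> V \<noteq> {}}"
proof -
  obtain V where V: "open V" "x \<in> V"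
    and fin: "finite {B \<in> \<B>. B \<inter> V \<noteq> {} \<and> \<not> B \<subseteq> B0}"
    using assms unfolding regular_at_def by blast
  have "finite (insert B0 {B \<in> \<B>. B \<inter> V \<noteq> {} \<and> \<not> B \<subseteq> B0})"
    using fin by simp
  then have "finite {F \<in> maximal_members \<B>. F \<inter> V \<noteq> {}}"
    using maximal_members_meeting_subset[OF B0(1), of V] finite_subset by blast
  with V show ?thesis by blast
qed

text \<open>Regularity at x also bounds the supersets of a neighbourhood B0 of x:
  each of them meets the witness V \<subseteq> B0 and so, unless it is B0 itself,
  belongs to the finite exceptional family.\<close>
lemma regular_at_finite_supersets:
  assumes "regular_at \<B> x" and "open B0" "x \<in> B0"
  shows "finite {Q \<in> \<B>. B0 \<subseteq> Q}"
proof -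
  obtain V where V: "x \<in> V" "V \<subseteq> B0"
    and fin: "finite {B \<in> \<B>. B \<inter> V \<noteq> {} \<and> \<not> B \<subseteq> B0}"
    using assms unfolding regular_at_def by blast
  have "{Q \<in> \<B>. B0 \<subseteq> Q} \<subseteq> insert B0 {B \<in> \<B>. B \<inter> V \<noteq> {} \<and> \<not> B \<subseteq> B0}"
    using V by blast
  moreover have "finite (insert B0 {B \<in> \<B>. B \<inter> V \<noteq> {} \<and> \<not> B \<subseteq> B0})"
    using fin by simp
  ultimately show ?thesis by (rule finite_subset)
qed

lemma regular_base_point:
  assumes basis: "topological_basis \<B>" and reg: "regular_at \<B> x"
  shows "(\<exists>U. open U \<and> x \<in> U \<and> finite {F \<in> maximal_members \<B>. F \<inter> U \<noteq> {}})
         \<and> x \<in> \<Union>(maximal_members \<B>)"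
proof
  obtain B0 where B0: "B0 \<in> \<B>" "x \<in> B0"
    using topological_basisE[OF basis open_UNIV, of x] by blast
  have "open B0" using basis B0(1) topological_basis_open by blast
  show "\<exists>U. open U \<and> x \<in> U \<and> finite {F \<in> maximal_members \<B>. F \<inter> U \<noteq> {}}"
    using regular_at_finite_maximal_near[OF reg B0(1) \<open>open B0\<close> B0(2)] .
  have "finite {Q \<in> \<B>. B0 \<subseteq> Q}"
    using regular_at_finite_supersets[OF reg \<open>open B0\<close> B0(2)] .
  then obtain M where "M \<in> maximal_members \<B>" "B0 \<subseteq> M"
    using maximal_member_above B0(1) by blast
  with B0(2) show "x \<in> \<Union>(maximal_members \<B>)" by blast
qed

theorem mainTheorem1:
  fixes \<B> :: "'a::t1_space set set"
  assumes "regular_base_nonisolated \<B>"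
  shows "locally_finite_nonisolated (maximal_members \<B>)
         \<and> UNIV - isolated_points \<subseteq> \<Union>(maximal_members \<B>)"
proof -
  have basis: "topological_basis \<B>"
    and reg: "\<And>x. x \<notin> isolated_points \<Longrightarrow> regular_at \<B> x"
    using assms unfolding regular_base_nonisolated_def by auto
  have point: "(\<exists>U. open U \<and> x \<in> U \<and> finite {F \<in> maximal_members \<B>. F \<inter> U \<noteq> {}})
      \<and> x \<in> \<Union>(maximal_members \<B>)" if "x \<notin> isolated_points" for x
    using regular_base_point[OF basis reg[OF that]] .
  have "locally_finite_nonisolated (maximal_members \<B>)"
    unfolding locally_finite_nonisolated_def using point by simp
  moreover have "UNIV - isolated_points \<subseteq> \<Union>(maximal_members \<B>)"
    using point by (simp add: subset_iff)
  ultimately show ?thesis ..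
qed

end
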